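(* Let $\mathbb{K}$ be a field of characteristic $0$, $\alpha,\gamma\in\mathbb{K}$, $A=A(\alpha,0,\gamma)$, and let $T_1$ be a one-dimensional right $A$-module and $T_2$ a one-dimensional left $A$-module. Then: (i) if $\gamma\neq0$ and $\alpha=1$, then $\mathrm{Tor}_1^A(T_1,T_2)=0$; (ii) if $\gamma\neq0$ and $\alpha\neq1$, then $\dim_{\mathbb{K}}\mathrm{Tor}_1^A(T_1,T_2)\le1$; (iii) if $\gamma=0$, then $\dim_{\mathbb{K}}\mathrm{Tor}_1^A(T_1,T_2)\le2$ and $\dim_{\mathbb{K}}\mathrm{Tor}_1^A(\mathbb{K},\mathbb{K})=2$, where $\mathbb{K}$ is the trivial module; moreover, if $\alpha\neq1$ and $T$ is a one-dimensional module with $T\not\cong\mathbb{K}$ (i.e. $d,u$ do not both act by $0$), then $\dim_{\mathbb{K}}\mathrm{Tor}_1^A(T,T)=1$, where $T$ is regarded both as a right and as a left module via the same scalars.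
   Context: For $(\alpha,\beta,\gamma)\in\mathbb{K}^3$, the down-up algebra $A(\alpha,\beta,\gamma)$ is the quotient of $\mathbb{K}\langle d,u\rangle$ by the two-sided ideal generated by $d^2u-(\alpha dud+\beta ud^2+\gamma d)$ and $du^2-(\alpha udu+\beta u^2d+\gamma u)$. A one-dimensional $A(\alpha,0,\gamma)$-module is $\mathbb{K}$ with $d$ and $u$ acting by scalars $\delta,\mu$ satisfying $\delta((1-\alpha)\delta\mu-\gamma)=0=\mu((1-\alpha)\delta\mu-\gamma)$; such a pair defines both a left and a right module. The trivial module $\mathbb{K}$ is the one with $\delta=\mu=0$. *)

theory Defs
  imports Main
begin

datatype gen = Dg | Ug

text \<open>Elements of the free algebra K<d,u>: finitely supported functions from words to K.\<close>
type_synonym 'k fa = "gen list \<Rightarrow> 'k"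

definition fa_carrier :: "('k::field) fa set" where
  "fa_carrier = {f. finite {w. f w \<noteq> 0}}"

definition fa_mon :: "gen list \<Rightarrow> ('k::field) fa" where
  "fa_mon w = (\<lambda>v. if v = w then 1 else 0)"

definition fa_mult :: "('k::field) fa \<Rightarrow> 'k fa \<Rightarrow> 'k fa" where
  "fa_mult f g = (\<lambda>w. \<Sum>i\<le>length w. f (take i w) * g (drop i w))"

definition fa_lincomb :: "(nat \<Rightarrow> 'k::field) \<Rightarrow> (nat \<Rightarrow> 'k fa) \<Rightarrow> nat \<Rightarrow> 'k fa" where
  "fa_lincomb c v n = (\<lambda>w. \<Sum>i<n. c i * v i w)"

definition fa_span :: "('k::field) fa set \<Rightarrow> 'k fa set" where
  "fa_span S = {fa_lincomb c v n | c v n. \<forall>i<n. v i \<in> S}"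

definition du_rel1 :: "'k::field \<Rightarrow> 'k \<Rightarrow> 'k \<Rightarrow> 'k fa" where
  "du_rel1 \<alpha> \<beta> \<gamma> = (\<lambda>w. fa_mon [Dg,Dg,Ug] w - \<alpha> * fa_mon [Dg,Ug,Dg] w
      - \<beta> * fa_mon [Ug,Dg,Dg] w - \<gamma> * fa_mon [Dg] w)"

definition du_rel2 :: "'k::field \<Rightarrow> 'k \<Rightarrow> 'k \<Rightarrow> 'k fa" where
  "du_rel2 \<alpha> \<beta> \<gamma> = (\<lambda>w. fa_mon [Dg,Ug,Ug] w - \<alpha> * fa_mon [Ug,Dg,Ug] w
      - \<beta> * fa_mon [Ug,Ug,Dg] w - \<gamma> * fa_mon [Ug] w)"

definition du_ideal :: "'k::field \<Rightarrow> 'k \<Rightarrow> 'k \<Rightarrow> 'k fa set" where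
  "du_ideal \<alpha> \<beta> \<gamma> = fa_span {fa_mult (fa_mult (fa_mon a) r) (fa_mon b) | a b r.
      r \<in> {du_rel1 \<alpha> \<beta> \<gamma>, du_rel2 \<alpha> \<beta> \<gamma>}}"

text \<open>Action of a word on a one-dimensional module with d, u acting by delta, mu.\<close>
definition word_eval :: "'k::field \<Rightarrow> 'k \<Rightarrow> gen list \<Rightarrow> 'k" where
  "word_eval \<delta> \<mu> w = prod_list (map (\<lambda>x. case x of Dg \<Rightarrow> \<delta> | Ug \<Rightarrow> \<mu>) w)"

definition fa_eval :: "'k::field \<Rightarrow> 'k \<Rightarrow> 'k fa \<Rightarrow> 'k" where
  "fa_eval \<delta> \<mu> f = (\<Sum>w\<in>{w. f w \<noteq> 0}. f w * word_eval \<delta> \<mu> w)"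

text \<open>(delta, mu) defines a one-dimensional A(alpha,0,gamma)-module.\<close>
definition one_dim_module :: "'k::field \<Rightarrow> 'k \<Rightarrow> 'k \<Rightarrow> 'k \<Rightarrow> bool" where
  "one_dim_module \<alpha> \<gamma> \<delta> \<mu> \<longleftrightarrow>
     \<delta> * ((1 - \<alpha>) * \<delta> * \<mu> - \<gamma>) = 0 \<and> \<mu> * ((1 - \<alpha>) * \<delta> * \<mu> - \<gamma>) = 0"

text \<open>Bar complex T1 (x) A^{(x)n} (x) T2 computing Tor^A(T1,T2), lifted to the free algebra.
  Degree 1 chains are A = F/I; d1(a) = chi1(a) - chi2(a);
  d2(a (x) b) = chi1(a) b - ab + chi2(b) a.\<close>
definition tor1_cycles :: "'k::field \<Rightarrow> 'k \<Rightarrow> 'k \<Rightarrow> 'k \<Rightarrow> 'k fa set" where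
  "tor1_cycles \<delta>1 \<mu>1 \<delta>2 \<mu>2 = {f \<in> fa_carrier. fa_eval \<delta>1 \<mu>1 f = fa_eval \<delta>2 \<mu>2 f}"

definition bar_bd :: "'k::field \<Rightarrow> 'k \<Rightarrow> 'k \<Rightarrow> 'k \<Rightarrow> gen list \<Rightarrow> gen list \<Rightarrow> 'k fa" where
  "bar_bd \<delta>1 \<mu>1 \<delta>2 \<mu>2 a b = (\<lambda>w. word_eval \<delta>1 \<mu>1 a * fa_mon b w - fa_mon (a @ b) w
      + word_eval \<delta>2 \<mu>2 b * fa_mon a w)"

definition tor1_boundaries :: "'k::field \<Rightarrow> 'k \<Rightarrow> 'k \<Rightarrow> 'k \<Rightarrow> 'k \<Rightarrow> 'k \<Rightarrow> 'k \<Rightarrow> 'k fa set" where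
  "tor1_boundaries \<alpha> \<beta> \<gamma> \<delta>1 \<mu>1 \<delta>2 \<mu>2 =
     {(\<lambda>w. g w + h w) | g h. g \<in> fa_span {bar_bd \<delta>1 \<mu>1 \<delta>2 \<mu>2 a b | a b. True}
                          \<and> h \<in> du_ideal \<alpha> \<beta> \<gamma>}"

text \<open>Dimension of the quotient K/S (S a subspace of K): least number of vectors of K
  spanning K modulo S.\<close>
definition fa_codim :: "('k::field) fa set \<Rightarrow> 'k fa set \<Rightarrow> nat" where
  "fa_codim K S = (LEAST n. \<exists>v. (\<forall>i<n. v i \<in> K) \<and>
       K \<subseteq> {(\<lambda>w. s w + fa_lincomb c v n w) | s c. s \<in> S})"

text \<open>dim_K Tor_1^A(T1,T2) for A = A(alpha,0,gamma), T1 right module (delta1,mu1),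
  T2 left module (delta2,mu2).\<close>
definition tor1_dim :: "'k::field \<Rightarrow> 'k \<Rightarrow> 'k \<Rightarrow> 'k \<Rightarrow> 'k \<Rightarrow> 'k \<Rightarrow> nat" where
  "tor1_dim \<alpha> \<gamma> \<delta>1 \<mu>1 \<delta>2 \<mu>2 =
     fa_codim (tor1_cycles \<delta>1 \<mu>1 \<delta>2 \<mu>2) (tor1_boundaries \<alpha> 0 \<gamma> \<delta>1 \<mu>1 \<delta>2 \<mu>2)"

end

theory Submission
  imports Defs
begin

text \<open>Modulo boundaries every chain of the bar complex reduces to a combination \<open>x d + y u\<close>, because
  the boundary of \<open>[g] \<otimes> t\<close> rewrites the word \<open>g t\<close> in terms of \<open>t\<close> and \<open>g\<close>. The characters
  \<open>\<chi>\<^sub>1, \<chi>\<^sub>2\<close> of the two modules kill the defining relations and \<open>\<chi>\<^sub>1 - \<chi>\<^sub>2\<close> kills every bar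
  boundary, so a cycle \<open>x d + y u\<close> satisfies \<open>x \<delta>\<^sub>1 + y \<mu>\<^sub>1 = x \<delta>\<^sub>2 + y \<mu>\<^sub>2\<close>: the homology has
  dimension at most 2, and at most 1 for non-isomorphic modules. For equal modules, reducing the two
  defining relations modulo bar boundaries produces explicit boundaries inside \<open>span {d, u}\<close>, which
  cut the bound down further when \<open>\<gamma> \<noteq> 0\<close>.
  Lower bounds come from linear functionals vanishing on all boundaries: any \<open>\<chi>\<close>-derivation
  \<open>D (a b) = \<chi> a * D b + D a * \<chi> b\<close> that vanishes on words containing both \<open>d\<close> and \<open>u\<close> will do.
  For the trivial module these are the coefficients of \<open>d\<close> and of \<open>u\<close>; for a module where one
  generator acts by \<open>0\<close> and the other by \<open>e \<noteq> 0\<close> it is the derivative of \<open>w \<mapsto> e ^ length w\<close>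
  with respect to \<open>e\<close>.\<close>

section \<open>Linear combinations in the free algebra\<close>

inductive_set lin_span :: "('k::field) fa set \<Rightarrow> 'k fa set" for X where
  lin_span_zero: "(\<lambda>w. 0) \<in> lin_span X"
| lin_span_step: "g \<in> lin_span X \<Longrightarrow> x \<in> X \<Longrightarrow> (\<lambda>w. g w + c * x w) \<in> lin_span X"

lemma fa_lincomb_Suc: "fa_lincomb c v (Suc n) = (\<lambda>w. fa_lincomb c v n w + c n * v n w)"
  by (simp add: fa_lincomb_def)

lemma fa_span_eq_lin_span: "fa_span X = lin_span X"
proof (intro equalityI subsetI)
  fix f assume "f \<in> fa_span X"
  then obtain c v n where f: "f = fa_lincomb c v n" and v: "\<forall>i<n. v i \<in> X"
    unfolding fa_span_def by blast
  have "fa_lincomb c v m \<in> lin_span X" if "m \<le> n" for m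
    using that by (induction m) (auto simp: fa_lincomb_Suc fa_lincomb_def lin_span.intros v)
  then show "f \<in> lin_span X" using f by simp
next
  fix f assume "f \<in> lin_span X"
  then show "f \<in> fa_span X"
  proof induction
    case lin_span_zero
    have "(\<lambda>w. 0) = fa_lincomb (\<lambda>_. 0) (\<lambda>_ _. 0) 0" by (simp add: fa_lincomb_def)
    then show ?case unfolding fa_span_def by blast
  next
    case (lin_span_step g x c)
    then obtain c' v n where g: "g = fa_lincomb c' v n" and v: "\<forall>i<n. v i \<in> X"
      unfolding fa_span_def by blast
    have "(\<lambda>w. g w + c * x w) = fa_lincomb (c'(n := c)) (v(n := x)) (Suc n)"
      unfolding g fa_lincomb_Suc by (simp add: fa_lincomb_def)
    moreover have "\<forall>i<Suc n. (v(n := x)) i \<in> X" using v lin_span_step by (simp add: less_Suc_eq)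
    ultimately show ?case unfolding fa_span_def by blast
  qed
qed

lemma lin_span_base: "x \<in> X \<Longrightarrow> x \<in> lin_span X"
  using lin_span_step[OF lin_span_zero, of x X 1] by simp

lemma lin_span_lincomb:
  assumes "g \<in> lin_span X" "h \<in> lin_span X"
  shows "(\<lambda>w. g w + c * h w) \<in> lin_span X"
  using assms(2)
proof induction
  case lin_span_zero
  then show ?case using assms(1) by simp
next
  case (lin_span_step h x c')
  have "(\<lambda>w. g w + c * (h w + c' * x w)) = (\<lambda>w. (g w + c * h w) + (c * c') * x w)"
    by (simp add: algebra_simps)
  then show ?case using lin_span.lin_span_step[OF lin_span_step.IH lin_span_step.hyps(2)] by simp
qed

lemma lin_span_mono: "X \<subseteq> Y \<Longrightarrow> lin_span X \<subseteq> lin_span Y"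
proof
  fix f assume "f \<in> lin_span X" "X \<subseteq> Y"
  then show "f \<in> lin_span Y"
    by (induction rule: lin_span.induct) (auto intro: lin_span.intros)
qed

lemma fa_carrier_zero [simp]: "(\<lambda>w. 0) \<in> fa_carrier"
  by (simp add: fa_carrier_def)

lemma fa_mon_in_fa_carrier [simp]: "fa_mon a \<in> fa_carrier"
proof -
  have "{w. fa_mon a w \<noteq> 0} \<subseteq> {a}" by (auto simp: fa_mon_def)
  then show ?thesis unfolding fa_carrier_def by (auto intro: finite_subset)
qed

lemma fa_carrier_add [simp]:
  assumes "f \<in> fa_carrier" "g \<in> fa_carrier"
  shows "(\<lambda>w. f w + g w) \<in> fa_carrier"
proof -
  have "{w. f w + g w \<noteq> 0} \<subseteq> {w. f w \<noteq> 0} \<union> {w. g w \<noteq> 0}" by auto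
  with assms show ?thesis unfolding fa_carrier_def by (auto intro: finite_subset)
qed

lemma fa_carrier_scale [simp]: "f \<in> fa_carrier \<Longrightarrow> (\<lambda>w. c * f w) \<in> fa_carrier"
  unfolding fa_carrier_def by (auto intro: finite_subset[rotated])

lemma fa_carrier_diff [simp]:
  assumes "f \<in> fa_carrier" "g \<in> fa_carrier"
  shows "(\<lambda>w. f w - g w) \<in> fa_carrier"
  using fa_carrier_add[OF assms(1) fa_carrier_scale[OF assms(2), of "-1"]] by simp

lemma lin_span_subset_fa_carrier: "X \<subseteq> fa_carrier \<Longrightarrow> lin_span X \<subseteq> fa_carrier"
proof
  fix f assume "f \<in> lin_span X" "X \<subseteq> fa_carrier"
  then show "f \<in> fa_carrier" by (induction rule: lin_span.induct) auto
qed

lemma fa_carrier_subset_lin_span_mon: "fa_carrier \<subseteq> lin_span (range fa_mon)"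
proof
  fix f :: "'k::field fa" assume "f \<in> fa_carrier"
  then have fin: "finite {w. f w \<noteq> 0}" by (simp add: fa_carrier_def)
  have "(\<lambda>w'. \<Sum>w\<in>F. f w * fa_mon w w') \<in> lin_span (range fa_mon)" if "finite F" for F
    using that
  proof induction
    case empty
    show ?case using lin_span_zero by simp
  next
    case (insert a F)
    then show ?case using lin_span_step[OF insert.IH, of "fa_mon a" "f a"] by (simp add: add.commute)
  qed
  moreover have "(\<lambda>w'. \<Sum>w\<in>{w. f w \<noteq> 0}. f w * fa_mon w w') = f"
  proof
    fix w'
    have "(\<Sum>w\<in>{w. f w \<noteq> 0}. f w * fa_mon w w') = (\<Sum>w\<in>{w. f w \<noteq> 0}. if w' = w then f w else 0)"
      by (rule sum.cong) (auto simp: fa_mon_def)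
    then show "(\<Sum>w\<in>{w. f w \<noteq> 0}. f w * fa_mon w w') = f w'"
      using fin by (simp add: sum.delta)
  qed
  ultimately show "f \<in> lin_span (range fa_mon)" using fin by metis
qed

definition fa_pair :: "(gen list \<Rightarrow> 'k::field) \<Rightarrow> 'k fa \<Rightarrow> 'k" where
  "fa_pair D f = (\<Sum>w\<in>{w. f w \<noteq> 0}. f w * D w)"

lemma fa_eval_eq_fa_pair: "fa_eval \<delta> \<mu> = fa_pair (word_eval \<delta> \<mu>)"
  by (simp add: fun_eq_iff fa_eval_def fa_pair_def)

lemma fa_pair_superset:
  assumes "finite F" "{w. f w \<noteq> 0} \<subseteq> F"
  shows "fa_pair D f = (\<Sum>w\<in>F. f w * D w)"
  unfolding fa_pair_def using assms by (intro sum.mono_neutral_left) auto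

lemma fa_pair_zero [simp]: "fa_pair D (\<lambda>w. 0) = 0"
  by (simp add: fa_pair_def)

lemma fa_pair_mon [simp]: "fa_pair D (fa_mon a) = D a"
  using fa_pair_superset[of "{a}" "fa_mon a" D] by (auto simp: fa_mon_def)

lemma fa_pair_add [simp]:
  assumes "f \<in> fa_carrier" "g \<in> fa_carrier"
  shows "fa_pair D (\<lambda>w. f w + g w) = fa_pair D f + fa_pair D g"
proof -
  let ?F = "{w. f w \<noteq> 0} \<union> {w. g w \<noteq> 0}"
  have fin: "finite ?F" using assms by (simp add: fa_carrier_def)
  have "fa_pair D (\<lambda>w. f w + g w) = (\<Sum>w\<in>?F. (f w + g w) * D w)"
    by (rule fa_pair_superset[OF fin]) auto
  also have "\<dots> = (\<Sum>w\<in>?F. f w * D w) + (\<Sum>w\<in>?F. g w * D w)"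
    by (simp add: distrib_right sum.distrib)
  also have "\<dots> = fa_pair D f + fa_pair D g"
    using fa_pair_superset[OF fin, of f D] fa_pair_superset[OF fin, of g D] by auto
  finally show ?thesis .
qed

lemma fa_pair_scale [simp]: "fa_pair D (\<lambda>w. c * f w) = c * fa_pair D f"
  by (cases "c = 0") (simp_all add: fa_pair_def sum_distrib_left mult.assoc)

lemma fa_pair_diff [simp]:
  assumes "f \<in> fa_carrier" "g \<in> fa_carrier"
  shows "fa_pair D (\<lambda>w. f w - g w) = fa_pair D f - fa_pair D g"
proof -
  have "(\<lambda>w. f w - g w) = (\<lambda>w. f w + (-1) * g w)" by simp
  then show ?thesis
    using fa_pair_add[OF assms(1) fa_carrier_scale[OF assms(2)], of D "-1"] fa_pair_scale[of D "-1" g]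
    by (simp del: fa_pair_scale)
qed

lemma fa_pair_lin_span_vanishes:
  assumes "X \<subseteq> fa_carrier" "\<And>x. x \<in> X \<Longrightarrow> fa_pair D x = 0" "f \<in> lin_span X"
  shows "fa_pair D f = 0"
  using assms(3)
proof induction
  case (lin_span_step g x c)
  have "g \<in> fa_carrier" "x \<in> fa_carrier"
    using lin_span_subset_fa_carrier[OF assms(1)] lin_span_step assms(1) by auto
  then show ?case using lin_span_step assms(2) by simp
qed simp

definition sandwich :: "gen list \<Rightarrow> 'k::field fa \<Rightarrow> gen list \<Rightarrow> 'k fa" where
  "sandwich a r b = fa_mult (fa_mult (fa_mon a) r) (fa_mon b)"

lemma fa_mult_mon_left_append: "fa_mult (fa_mon a) f (a @ v) = f v"
proof -
  have "fa_mult (fa_mon a) f (a @ v) = (\<Sum>i\<le>length (a @ v). if i = length a then f v else 0)"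
    unfolding fa_mult_def
  proof (rule sum.cong[OF refl])
    fix i assume "i \<in> {..length (a @ v)}"
    then have "take i (a @ v) = a \<longleftrightarrow> i = length a" by (auto dest: arg_cong[of _ _ length])
    then show "fa_mon a (take i (a @ v)) * f (drop i (a @ v)) = (if i = length a then f v else 0)"
      by (simp add: fa_mon_def)
  qed
  then show ?thesis by simp
qed

lemma fa_mult_mon_right_append: "fa_mult f (fa_mon b) (v @ b) = f v"
proof -
  have "fa_mult f (fa_mon b) (v @ b) = (\<Sum>i\<le>length (v @ b). if i = length v then f v else 0)"
    unfolding fa_mult_def
  proof (rule sum.cong[OF refl])
    fix i assume "i \<in> {..length (v @ b)}"
    then have "drop i (v @ b) = b \<longleftrightarrow> i = length v" by (auto dest: arg_cong[of _ _ length])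
    then show "f (take i (v @ b)) * fa_mon b (drop i (v @ b)) = (if i = length v then f v else 0)"
      by (simp add: fa_mon_def)
  qed
  then show ?thesis by simp
qed

lemma fa_mult_mon_left_eq_0: "\<nexists>v. w = a @ v \<Longrightarrow> fa_mult (fa_mon a) f w = 0"
  unfolding fa_mult_def fa_mon_def
  by (rule sum.neutral) (metis append_take_drop_id mult_zero_left)

lemma fa_mult_mon_right_eq_0: "\<nexists>v. w = v @ b \<Longrightarrow> fa_mult f (fa_mon b) w = 0"
  unfolding fa_mult_def fa_mon_def
  by (rule sum.neutral) (metis append_take_drop_id mult_zero_right)

lemma sandwich_append [simp]: "sandwich a r b (a @ v @ b) = r v"
  unfolding sandwich_def
  using fa_mult_mon_right_append[of "fa_mult (fa_mon a) r" b "a @ v"] fa_mult_mon_left_append[of a r v]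
  by simp

lemma sandwich_nonzero: "sandwich a r b w \<noteq> 0 \<Longrightarrow> \<exists>v. w = a @ v @ b \<and> r v \<noteq> 0"
  unfolding sandwich_def
  by (metis append.assoc fa_mult_mon_left_eq_0 fa_mult_mon_right_eq_0 fa_mult_mon_right_append
      fa_mult_mon_left_append)

lemma sandwich_support: "{w. sandwich a r b w \<noteq> 0} = (\<lambda>v. a @ v @ b) ` {v. r v \<noteq> 0}"
  using sandwich_nonzero by fastforce

lemma sandwich_in_fa_carrier: "r \<in> fa_carrier \<Longrightarrow> sandwich a r b \<in> fa_carrier"
  by (simp add: fa_carrier_def sandwich_support)

lemma sandwich_Nil: "sandwich [] r [] = r"
  using sandwich_append[of "[]" r "[]"] by (simp add: fun_eq_iff)

lemma word_eval_append: "word_eval \<delta> \<mu> (a @ b) = word_eval \<delta> \<mu> a * word_eval \<delta> \<mu> b"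
  by (simp add: word_eval_def)

lemma fa_pair_word_eval_sandwich:
  "fa_pair (word_eval \<delta> \<mu>) (sandwich a r b) = word_eval \<delta> \<mu> a * fa_pair (word_eval \<delta> \<mu>) r * word_eval \<delta> \<mu> b"
proof -
  let ?\<chi> = "word_eval \<delta> \<mu>"
  have inj: "inj_on (\<lambda>v. a @ v @ b) {v. r v \<noteq> 0}" by (auto simp: inj_on_def)
  have "fa_pair ?\<chi> (sandwich a r b) = (\<Sum>v | r v \<noteq> 0. ?\<chi> a * (r v * ?\<chi> v) * ?\<chi> b)"
    unfolding fa_pair_def sandwich_support sum.reindex[OF inj]
    by (simp add: word_eval_append algebra_simps)
  then show ?thesis by (simp add: fa_pair_def sum_distrib_left sum_distrib_right)
qed

lemma fa_pair_sandwich_eq_0: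
  assumes "\<And>v. r v \<noteq> 0 \<Longrightarrow> D (a @ v @ b) = 0"
  shows "fa_pair D (sandwich a r b) = 0"
  unfolding fa_pair_def using assms by (auto dest!: sandwich_nonzero intro!: sum.neutral)

section \<open>Boundaries of the bar complex\<close>

definition relation_sandwiches :: "'k::field \<Rightarrow> 'k \<Rightarrow> 'k \<Rightarrow> 'k fa set" where
  "relation_sandwiches \<alpha> \<beta> \<gamma> = {sandwich a r b | a b r. r \<in> {du_rel1 \<alpha> \<beta> \<gamma>, du_rel2 \<alpha> \<beta> \<gamma>}}"

lemma tor1_boundaries_eq_lin_span:
  "tor1_boundaries \<alpha> \<beta> \<gamma> \<delta>1 \<mu>1 \<delta>2 \<mu>2 =
     lin_span ({bar_bd \<delta>1 \<mu>1 \<delta>2 \<mu>2 a b | a b. True} \<union> relation_sandwiches \<alpha> \<beta> \<gamma>)"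
  (is "_ = lin_span (?B \<union> ?R)")
proof -
  have "tor1_boundaries \<alpha> \<beta> \<gamma> \<delta>1 \<mu>1 \<delta>2 \<mu>2 = {(\<lambda>w. g w + h w) | g h. g \<in> lin_span ?B \<and> h \<in> lin_span ?R}"
    unfolding tor1_boundaries_def du_ideal_def fa_span_eq_lin_span relation_sandwiches_def sandwich_def
    by simp
  also have "\<dots> = lin_span (?B \<union> ?R)"
  proof (intro equalityI subsetI)
    fix f assume "f \<in> {(\<lambda>w. g w + h w) | g h. g \<in> lin_span ?B \<and> h \<in> lin_span ?R}"
    then obtain g h where "f = (\<lambda>w. g w + 1 * h w)" "g \<in> lin_span (?B \<union> ?R)" "h \<in> lin_span (?B \<union> ?R)"
      using lin_span_mono[of ?B "?B \<union> ?R"] lin_span_mono[of ?R "?B \<union> ?R"] by auto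
    then show "f \<in> lin_span (?B \<union> ?R)" using lin_span_lincomb by blast
  next
    fix f assume "f \<in> lin_span (?B \<union> ?R)"
    then show "f \<in> {(\<lambda>w. g w + h w) | g h. g \<in> lin_span ?B \<and> h \<in> lin_span ?R}"
    proof induction
      case lin_span_zero
      show ?case
        by (intro CollectI exI[of _ "\<lambda>w. 0"]) (simp add: lin_span.lin_span_zero)
    next
      case (lin_span_step f' x c)
      then obtain g h where gh: "f' = (\<lambda>w. g w + h w)" "g \<in> lin_span ?B" "h \<in> lin_span ?R"
        by blast
      show ?case
      proof (cases "x \<in> ?B")
        case True
        then have "(\<lambda>w. f' w + c * x w) = (\<lambda>w. (g w + c * x w) + h w)" "(\<lambda>w. g w + c * x w) \<in> lin_span ?B"
          using gh lin_span.lin_span_step[OF gh(2) True] by (auto simp: algebra_simps)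
        then show ?thesis using gh by (intro CollectI exI[of _ "\<lambda>w. g w + c * x w"] exI[of _ h]) simp
      next
        case False
        then have "(\<lambda>w. f' w + c * x w) = (\<lambda>w. g w + (h w + c * x w))" "(\<lambda>w. h w + c * x w) \<in> lin_span ?R"
          using gh lin_span.lin_span_step[OF gh(3)] lin_span_step.hyps False by (auto simp: algebra_simps)
        then show ?thesis using gh by (intro CollectI exI[of _ g] exI[of _ "\<lambda>w. h w + c * x w"]) simp
      qed
    qed
  qed
  finally show ?thesis .
qed

lemma du_rel_in_fa_carrier: "r \<in> {du_rel1 \<alpha> \<beta> \<gamma>, du_rel2 \<alpha> \<beta> \<gamma>} \<Longrightarrow> r \<in> fa_carrier"
  by (auto simp: du_rel1_def du_rel2_def)

lemma bar_bd_in_fa_carrier: "bar_bd \<delta>1 \<mu>1 \<delta>2 \<mu>2 a b \<in> fa_carrier"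
  by (simp add: bar_bd_def)

lemma tor1_boundaries_subset_fa_carrier:
  "tor1_boundaries \<alpha> \<beta> \<gamma> \<delta>1 \<mu>1 \<delta>2 \<mu>2 \<subseteq> fa_carrier"
  unfolding tor1_boundaries_eq_lin_span relation_sandwiches_def
  by (rule lin_span_subset_fa_carrier)
     (auto intro: bar_bd_in_fa_carrier sandwich_in_fa_carrier du_rel_in_fa_carrier)

lemma tor1_boundaries_lincomb:
  "s \<in> tor1_boundaries \<alpha> \<beta> \<gamma> \<delta>1 \<mu>1 \<delta>2 \<mu>2 \<Longrightarrow> x \<in> tor1_boundaries \<alpha> \<beta> \<gamma> \<delta>1 \<mu>1 \<delta>2 \<mu>2 \<Longrightarrow>
    (\<lambda>w. s w + c * x w) \<in> tor1_boundaries \<alpha> \<beta> \<gamma> \<delta>1 \<mu>1 \<delta>2 \<mu>2"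
  unfolding tor1_boundaries_eq_lin_span by (rule lin_span_lincomb)

lemma zero_in_tor1_boundaries: "(\<lambda>w. 0) \<in> tor1_boundaries \<alpha> \<beta> \<gamma> \<delta>1 \<mu>1 \<delta>2 \<mu>2"
  unfolding tor1_boundaries_eq_lin_span by (rule lin_span_zero)

lemma bar_bd_in_tor1_boundaries: "bar_bd \<delta>1 \<mu>1 \<delta>2 \<mu>2 a b \<in> tor1_boundaries \<alpha> \<beta> \<gamma> \<delta>1 \<mu>1 \<delta>2 \<mu>2"
  unfolding tor1_boundaries_eq_lin_span by (rule lin_span_base) blast

lemma du_rel_in_tor1_boundaries:
  "r \<in> {du_rel1 \<alpha> \<beta> \<gamma>, du_rel2 \<alpha> \<beta> \<gamma>} \<Longrightarrow> r \<in> tor1_boundaries \<alpha> \<beta> \<gamma> \<delta>1 \<mu>1 \<delta>2 \<mu>2"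
  unfolding tor1_boundaries_eq_lin_span relation_sandwiches_def
  by (rule lin_span_base) (metis (mono_tags, lifting) UnI2 mem_Collect_eq sandwich_Nil)

lemma fa_pair_tor1_boundaries_eq_0:
  assumes "\<And>a b. fa_pair D (bar_bd \<delta>1 \<mu>1 \<delta>2 \<mu>2 a b) = 0"
      and "\<And>a b r. r \<in> {du_rel1 \<alpha> \<beta> \<gamma>, du_rel2 \<alpha> \<beta> \<gamma>} \<Longrightarrow> fa_pair D (sandwich a r b) = 0"
      and "s \<in> tor1_boundaries \<alpha> \<beta> \<gamma> \<delta>1 \<mu>1 \<delta>2 \<mu>2"
  shows "fa_pair D s = 0"
  using assms(3) unfolding tor1_boundaries_eq_lin_span
  by (rule fa_pair_lin_span_vanishes[rotated 2])
     (auto simp: relation_sandwiches_def assms(1,2)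
           intro: bar_bd_in_fa_carrier sandwich_in_fa_carrier du_rel_in_fa_carrier)

lemma fa_pair_diff_functional: "fa_pair (\<lambda>w. D w - E w) f = fa_pair D f - fa_pair E f"
  by (simp add: fa_pair_def right_diff_distrib sum_subtractf)

lemma fa_pair_word_eval_du_rel:
  assumes "one_dim_module \<alpha> \<gamma> \<delta> \<mu>" "r \<in> {du_rel1 \<alpha> 0 \<gamma>, du_rel2 \<alpha> 0 \<gamma>}"
  shows "fa_pair (word_eval \<delta> \<mu>) r = 0"
  using assms by (auto simp: du_rel1_def du_rel2_def word_eval_def one_dim_module_def algebra_simps)

lemma fa_eval_tor1_boundary:
  assumes "one_dim_module \<alpha> \<gamma> \<delta>1 \<mu>1" "one_dim_module \<alpha> \<gamma> \<delta>2 \<mu>2"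
      and "s \<in> tor1_boundaries \<alpha> 0 \<gamma> \<delta>1 \<mu>1 \<delta>2 \<mu>2"
  shows "fa_eval \<delta>1 \<mu>1 s = fa_eval \<delta>2 \<mu>2 s"
proof -
  have "fa_pair (\<lambda>w. word_eval \<delta>1 \<mu>1 w - word_eval \<delta>2 \<mu>2 w) s = 0"
    using assms(3)
  proof (rule fa_pair_tor1_boundaries_eq_0[rotated 2])
    show "fa_pair (\<lambda>w. word_eval \<delta>1 \<mu>1 w - word_eval \<delta>2 \<mu>2 w) (bar_bd \<delta>1 \<mu>1 \<delta>2 \<mu>2 a b) = 0" for a b
      by (simp add: fa_pair_diff_functional bar_bd_def) (simp add: word_eval_append algebra_simps)
    show "fa_pair (\<lambda>w. word_eval \<delta>1 \<mu>1 w - word_eval \<delta>2 \<mu>2 w) (sandwich a r b) = 0"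
      if "r \<in> {du_rel1 \<alpha> 0 \<gamma>, du_rel2 \<alpha> 0 \<gamma>}" for a b r
      using fa_pair_word_eval_du_rel[OF assms(1) that] fa_pair_word_eval_du_rel[OF assms(2) that]
      by (simp add: fa_pair_diff_functional fa_pair_word_eval_sandwich)
  qed
  then show ?thesis by (simp add: fa_eval_eq_fa_pair fa_pair_diff_functional)
qed

section \<open>Reduction modulo boundaries\<close>

definition plus_span_du :: "'k::field fa set \<Rightarrow> 'k fa set" where
  "plus_span_du S = {f. \<exists>s\<in>S. \<exists>x y. f = (\<lambda>w. s w + x * fa_mon [Dg] w + y * fa_mon [Ug] w)}"

lemma plus_span_duI:
  "s \<in> S \<Longrightarrow> f = (\<lambda>w. s w + x * fa_mon [Dg] w + y * fa_mon [Ug] w) \<Longrightarrow> f \<in> plus_span_du S"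
  unfolding plus_span_du_def by blast

lemma plus_span_du_lincomb:
  assumes closed: "\<And>s x c. s \<in> S \<Longrightarrow> x \<in> S \<Longrightarrow> (\<lambda>w. s w + c * x w) \<in> S"
      and "f \<in> plus_span_du S" "g \<in> plus_span_du S"
  shows "(\<lambda>w. f w + c * g w) \<in> plus_span_du S"
proof -
  obtain s x y s' x' y' where "s \<in> S" "s' \<in> S"
    and "f = (\<lambda>w. s w + x * fa_mon [Dg] w + y * fa_mon [Ug] w)"
    and "g = (\<lambda>w. s' w + x' * fa_mon [Dg] w + y' * fa_mon [Ug] w)"
    using assms(2,3) unfolding plus_span_du_def by blast
  then have "(\<lambda>w. f w + c * g w) =
      (\<lambda>w. (s w + c * s' w) + (x + c * x') * fa_mon [Dg] w + (y + c * y') * fa_mon [Ug] w)"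
    and "(\<lambda>w. s w + c * s' w) \<in> S"
    by (auto simp: algebra_simps closed)
  then show ?thesis by (intro plus_span_duI) auto
qed

lemma subset_plus_span_du: "S \<subseteq> plus_span_du S"
  by (auto intro!: plus_span_duI[where x=0 and y=0])

lemma fa_mon_in_plus_span_du_tor1_boundaries:
  "fa_mon v \<in> plus_span_du (tor1_boundaries \<alpha> \<beta> \<gamma> \<delta>1 \<mu>1 \<delta>2 \<mu>2)"
proof (induction v)
  case Nil
  have "fa_mon [] = bar_bd \<delta>1 \<mu>1 \<delta>2 \<mu>2 [] []"
    by (simp add: bar_bd_def fun_eq_iff word_eval_def)
  then show ?case using subset_plus_span_du bar_bd_in_tor1_boundaries by fastforce
next
  case (Cons g t)
  let ?B = "tor1_boundaries \<alpha> \<beta> \<gamma> \<delta>1 \<mu>1 \<delta>2 \<mu>2"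
  let ?h = "\<lambda>w. word_eval \<delta>2 \<mu>2 t * fa_mon [g] w - bar_bd \<delta>1 \<mu>1 \<delta>2 \<mu>2 [g] t w"
  have "(\<lambda>w. 0 + (- 1) * bar_bd \<delta>1 \<mu>1 \<delta>2 \<mu>2 [g] t w) \<in> ?B"
    by (intro tor1_boundaries_lincomb zero_in_tor1_boundaries bar_bd_in_tor1_boundaries)
  then have "?h \<in> plus_span_du ?B"
  proof (cases g)
    case Dg
    with \<open>_ \<in> ?B\<close> show ?thesis by (auto intro!: plus_span_duI[where y=0])
  next
    case Ug
    with \<open>_ \<in> ?B\<close> show ?thesis by (auto intro!: plus_span_duI[where x=0])
  qed
  moreover have "fa_mon (g # t) = (\<lambda>w. ?h w + word_eval \<delta>1 \<mu>1 [g] * fa_mon t w)"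
    by (simp add: bar_bd_def fun_eq_iff)
  ultimately show ?case
    using plus_span_du_lincomb[OF tor1_boundaries_lincomb _ Cons.IH] by metis
qed

lemma fa_carrier_subset_plus_span_du_tor1_boundaries:
  fixes \<alpha> :: "'k::field"
  shows "fa_carrier \<subseteq> plus_span_du (tor1_boundaries \<alpha> \<beta> \<gamma> \<delta>1 \<mu>1 \<delta>2 \<mu>2)"
proof
  fix f :: "'k fa" assume "f \<in> fa_carrier"
  then have "f \<in> lin_span (range fa_mon)" using fa_carrier_subset_lin_span_mon by blast
  then show "f \<in> plus_span_du (tor1_boundaries \<alpha> \<beta> \<gamma> \<delta>1 \<mu>1 \<delta>2 \<mu>2)"
    by induction (auto intro: plus_span_du_lincomb tor1_boundaries_lincomb
        fa_mon_in_plus_span_du_tor1_boundaries subset_plus_span_du[THEN subsetD]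
        zero_in_tor1_boundaries)
qed

section \<open>Upper bounds\<close>

definition spans_modulo :: "'k::field fa set \<Rightarrow> 'k fa set \<Rightarrow> nat \<Rightarrow> bool" where
  "spans_modulo K S n \<longleftrightarrow>
     (\<exists>v. (\<forall>i<n. v i \<in> K) \<and> K \<subseteq> {(\<lambda>w. s w + fa_lincomb c v n w) | s c. s \<in> S})"

lemma fa_codim_le: "spans_modulo K S n \<Longrightarrow> fa_codim K S \<le> n"
  unfolding fa_codim_def spans_modulo_def[symmetric] by (rule Least_le)

lemma fa_codim_eqI:
  "spans_modulo K S n \<Longrightarrow> (\<And>m. m < n \<Longrightarrow> \<not> spans_modulo K S m) \<Longrightarrow> fa_codim K S = n"
  unfolding fa_codim_def spans_modulo_def[symmetric]
  by (rule Least_equality) (auto simp: not_less[symmetric])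

lemma fa_lincomb_0 [simp]: "fa_lincomb c v 0 = (\<lambda>w. 0)"
  by (simp add: fa_lincomb_def)

lemma fa_lincomb_1 [simp]: "fa_lincomb c v (Suc 0) = (\<lambda>w. c 0 * v 0 w)"
  by (simp add: fa_lincomb_def)

lemma fa_lincomb_2: "fa_lincomb c v 2 = (\<lambda>w. c 0 * v 0 w + c 1 * v 1 w)"
  by (simp add: fa_lincomb_def numeral_2_eq_2)

lemma spans_modulo_tor1_cycles:
  assumes modules: "one_dim_module \<alpha> \<gamma> \<delta>1 \<mu>1" "one_dim_module \<alpha> \<gamma> \<delta>2 \<mu>2"
      and v: "\<forall>i<n. v i \<in> tor1_cycles \<delta>1 \<mu>1 \<delta>2 \<mu>2"
      and du: "\<And>x y. x * \<delta>1 + y * \<mu>1 = x * \<delta>2 + y * \<mu>2 \<Longrightarrow>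
                 \<exists>s\<in>tor1_boundaries \<alpha> 0 \<gamma> \<delta>1 \<mu>1 \<delta>2 \<mu>2. \<exists>c.
                   (\<lambda>w. x * fa_mon [Dg] w + y * fa_mon [Ug] w) = (\<lambda>w. s w + fa_lincomb c v n w)"
  shows "spans_modulo (tor1_cycles \<delta>1 \<mu>1 \<delta>2 \<mu>2) (tor1_boundaries \<alpha> 0 \<gamma> \<delta>1 \<mu>1 \<delta>2 \<mu>2) n"
  unfolding spans_modulo_def
proof (intro exI conjI subsetI)
  let ?B = "tor1_boundaries \<alpha> 0 \<gamma> \<delta>1 \<mu>1 \<delta>2 \<mu>2"
  fix f assume f: "f \<in> tor1_cycles \<delta>1 \<mu>1 \<delta>2 \<mu>2"
  then obtain s x y where s: "s \<in> ?B" and fe: "f = (\<lambda>w. s w + x * fa_mon [Dg] w + y * fa_mon [Ug] w)"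
    using fa_carrier_subset_plus_span_du_tor1_boundaries
    unfolding tor1_cycles_def plus_span_du_def by blast
  have "s \<in> fa_carrier" using s tor1_boundaries_subset_fa_carrier by blast
  then have "fa_eval \<delta>1 \<mu>1 f = fa_eval \<delta>1 \<mu>1 s + x * \<delta>1 + y * \<mu>1"
            "fa_eval \<delta>2 \<mu>2 f = fa_eval \<delta>2 \<mu>2 s + x * \<delta>2 + y * \<mu>2"
    unfolding fe fa_eval_eq_fa_pair by (simp_all add: word_eval_def)
  then have "x * \<delta>1 + y * \<mu>1 = x * \<delta>2 + y * \<mu>2"
    using f fa_eval_tor1_boundary[OF modules s] by (simp add: tor1_cycles_def)
  then obtain s' c where s': "s' \<in> ?B"
    and e: "(\<lambda>w. x * fa_mon [Dg] w + y * fa_mon [Ug] w) = (\<lambda>w. s' w + fa_lincomb c v n w)"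
    using du by blast
  have "f = (\<lambda>w. (s w + 1 * s' w) + fa_lincomb c v n w)"
    using fun_cong[OF e] unfolding fe by (simp add: fun_eq_iff algebra_simps)
  moreover have "(\<lambda>w. s w + 1 * s' w) \<in> ?B" by (rule tor1_boundaries_lincomb[OF s s'])
  ultimately show "f \<in> {(\<lambda>w. s w + fa_lincomb c v n w) | s c. s \<in> ?B}"
    by (intro CollectI exI[of _ "\<lambda>w. s w + 1 * s' w"] exI[of _ c]) simp
qed (use v in blast)

lemma fa_mon_gen_in_tor1_cycles: "fa_mon [g] \<in> tor1_cycles \<delta> \<mu> \<delta> \<mu>"
  by (simp add: tor1_cycles_def)

lemma spans_modulo_tor1_cycles_2:
  assumes "one_dim_module \<alpha> \<gamma> \<delta> \<mu>"
  shows "spans_modulo (tor1_cycles \<delta> \<mu> \<delta> \<mu>) (tor1_boundaries \<alpha> 0 \<gamma> \<delta> \<mu> \<delta> \<mu>) 2"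
proof (rule spans_modulo_tor1_cycles[OF assms assms])
  show "\<forall>i<2. (\<lambda>i. if i = 0 then fa_mon [Dg] else fa_mon [Ug]) i \<in> tor1_cycles \<delta> \<mu> \<delta> \<mu>"
    by (simp add: fa_mon_gen_in_tor1_cycles)
  fix x y
  show "\<exists>s\<in>tor1_boundaries \<alpha> 0 \<gamma> \<delta> \<mu> \<delta> \<mu>. \<exists>c.
          (\<lambda>w. x * fa_mon [Dg] w + y * fa_mon [Ug] w) =
          (\<lambda>w. s w + fa_lincomb c (\<lambda>i. if i = 0 then fa_mon [Dg] else fa_mon [Ug]) 2 w)"
    by (intro bexI[OF _ zero_in_tor1_boundaries] exI[of _ "\<lambda>i. if i = 0 then x else y"])
       (simp add: fa_lincomb_2)
qed

lemma spans_modulo_tor1_cycles_distinct: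
  assumes modules: "one_dim_module \<alpha> \<gamma> \<delta>1 \<mu>1" "one_dim_module \<alpha> \<gamma> \<delta>2 \<mu>2"
      and distinct: "(\<delta>1, \<mu>1) \<noteq> (\<delta>2, \<mu>2)"
  shows "spans_modulo (tor1_cycles \<delta>1 \<mu>1 \<delta>2 \<mu>2) (tor1_boundaries \<alpha> 0 \<gamma> \<delta>1 \<mu>1 \<delta>2 \<mu>2) 1"
proof -
  define p where "p = \<delta>1 - \<delta>2"
  define q where "q = \<mu>1 - \<mu>2"
  have pq: "p \<noteq> 0 \<or> q \<noteq> 0" using distinct by (auto simp: p_def q_def)
  define v0 where "v0 = (\<lambda>w. q * fa_mon [Dg] w - p * fa_mon [Ug] w)"
  show ?thesis
  proof (rule spans_modulo_tor1_cycles[OF modules, where v = "\<lambda>_. v0"])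
    show "\<forall>i<1. v0 \<in> tor1_cycles \<delta>1 \<mu>1 \<delta>2 \<mu>2"
      by (simp add: v0_def tor1_cycles_def fa_eval_eq_fa_pair word_eval_def p_def q_def algebra_simps)
    fix x y assume "x * \<delta>1 + y * \<mu>1 = x * \<delta>2 + y * \<mu>2"
    then have "x * p + y * q = 0" by (simp add: p_def q_def algebra_simps)
    then obtain c0 where "x = c0 * q" "y = - c0 * p"
    proof (cases "p = 0")
      case True
      with pq \<open>x * p + y * q = 0\<close> show ?thesis by (intro that[of "x / q"]) simp_all
    next
      case False
      with \<open>x * p + y * q = 0\<close> show ?thesis
        by (intro that[of "- y / p"]) (simp_all add: field_simps, simp add: algebra_simps add_eq_0_iff)
    qed
    then show "\<exists>s\<in>tor1_boundaries \<alpha> 0 \<gamma> \<delta>1 \<mu>1 \<delta>2 \<mu>2. \<exists>c.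
        (\<lambda>w. x * fa_mon [Dg] w + y * fa_mon [Ug] w) = (\<lambda>w. s w + fa_lincomb c (\<lambda>_. v0) 1 w)"
      by (intro bexI[OF _ zero_in_tor1_boundaries] exI[of _ "\<lambda>_. c0"])
         (simp add: v0_def fun_eq_iff algebra_simps)
  qed
qed

lemma spans_modulo_tor1_cycles_1:
  assumes "one_dim_module \<alpha> \<gamma> \<delta> \<mu>"
      and E: "(\<lambda>w. a * fa_mon [Dg] w + b * fa_mon [Ug] w) \<in> tor1_boundaries \<alpha> 0 \<gamma> \<delta> \<mu> \<delta> \<mu>"
      and nonzero: "a \<noteq> 0 \<or> b \<noteq> 0"
  shows "spans_modulo (tor1_cycles \<delta> \<mu> \<delta> \<mu>) (tor1_boundaries \<alpha> 0 \<gamma> \<delta> \<mu> \<delta> \<mu>) 1"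
proof -
  let ?E = "\<lambda>w. a * fa_mon [Dg] w + b * fa_mon [Ug] w"
  define v0 :: "'a fa" where "v0 = (if a \<noteq> 0 then fa_mon [Ug] else fa_mon [Dg])"
  show ?thesis
  proof (rule spans_modulo_tor1_cycles[OF assms(1) assms(1), where v = "\<lambda>_. v0"])
    show "\<forall>i<1. v0 \<in> tor1_cycles \<delta> \<mu> \<delta> \<mu>" by (simp add: v0_def fa_mon_gen_in_tor1_cycles)
    fix x y
    have sE: "(\<lambda>w. 0 + e * ?E w) \<in> tor1_boundaries \<alpha> 0 \<gamma> \<delta> \<mu> \<delta> \<mu>" for e
      by (rule tor1_boundaries_lincomb[OF zero_in_tor1_boundaries E])
    show "\<exists>s\<in>tor1_boundaries \<alpha> 0 \<gamma> \<delta> \<mu> \<delta> \<mu>. \<exists>c.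
        (\<lambda>w. x * fa_mon [Dg] w + y * fa_mon [Ug] w) = (\<lambda>w. s w + fa_lincomb c (\<lambda>_. v0) 1 w)"
    proof (cases "a = 0")
      case False
      show ?thesis
        by (intro bexI[OF _ sE[of "x / a"]] exI[of _ "\<lambda>_. y - x * b / a"])
           (use False in \<open>simp add: v0_def fun_eq_iff field_simps\<close>)
    next
      case True
      with nonzero show ?thesis
        by (intro bexI[OF _ sE[of "y / b"]] exI[of _ "\<lambda>_. x"])
           (simp add: v0_def fun_eq_iff field_simps)
    qed
  qed
qed

lemma spans_modulo_tor1_cycles_0:
  assumes "one_dim_module \<alpha> \<gamma> \<delta> \<mu>"
      and "(\<lambda>w. a * fa_mon [Dg] w) \<in> tor1_boundaries \<alpha> 0 \<gamma> \<delta> \<mu> \<delta> \<mu>" "a \<noteq> 0"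
      and "(\<lambda>w. b * fa_mon [Ug] w) \<in> tor1_boundaries \<alpha> 0 \<gamma> \<delta> \<mu> \<delta> \<mu>" "b \<noteq> 0"
  shows "spans_modulo (tor1_cycles \<delta> \<mu> \<delta> \<mu>) (tor1_boundaries \<alpha> 0 \<gamma> \<delta> \<mu> \<delta> \<mu>) 0"
proof (rule spans_modulo_tor1_cycles[OF assms(1) assms(1)])
  fix x y
  have "(\<lambda>w. (0 + (x / a) * (a * fa_mon [Dg] w)) + (y / b) * (b * fa_mon [Ug] w))
      \<in> tor1_boundaries \<alpha> 0 \<gamma> \<delta> \<mu> \<delta> \<mu>"
    by (intro tor1_boundaries_lincomb zero_in_tor1_boundaries assms(2,4))
  then show "\<exists>s\<in>tor1_boundaries \<alpha> 0 \<gamma> \<delta> \<mu> \<delta> \<mu>. \<exists>c.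
      (\<lambda>w. x * fa_mon [Dg] w + y * fa_mon [Ug] w) = (\<lambda>w. s w + fa_lincomb c v 0 w)"
    using assms(3,5) by (intro bexI exI) auto
qed simp

lemma du_rel1_reduced_in_tor1_boundaries:
  "(\<lambda>w. ((1 - \<alpha>) * (2 * \<delta> * \<mu>) - \<gamma>) * fa_mon [Dg] w + ((1 - \<alpha>) * \<delta>\<^sup>2) * fa_mon [Ug] w)
     \<in> tor1_boundaries \<alpha> 0 \<gamma> \<delta> \<mu> \<delta> \<mu>"
proof -
  let ?B = "bar_bd \<delta> \<mu> \<delta> \<mu>"
  have "(\<lambda>w. ((du_rel1 \<alpha> 0 \<gamma> w + ((1 - \<alpha>) * \<delta>) * ?B [Dg] [Ug] w) + 1 * ?B [Dg] [Dg, Ug] w)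
            + (- \<alpha>) * ?B [Dg, Ug] [Dg] w) \<in> tor1_boundaries \<alpha> 0 \<gamma> \<delta> \<mu> \<delta> \<mu>"
    by (intro tor1_boundaries_lincomb du_rel_in_tor1_boundaries bar_bd_in_tor1_boundaries) simp
  then show ?thesis
    by (simp add: du_rel1_def bar_bd_def word_eval_def algebra_simps power2_eq_square)
qed

lemma du_rel2_reduced_in_tor1_boundaries:
  "(\<lambda>w. ((1 - \<alpha>) * \<mu>\<^sup>2) * fa_mon [Dg] w + ((1 - \<alpha>) * (2 * \<delta> * \<mu>) - \<gamma>) * fa_mon [Ug] w)
     \<in> tor1_boundaries \<alpha> 0 \<gamma> \<delta> \<mu> \<delta> \<mu>"
proof -
  let ?B = "bar_bd \<delta> \<mu> \<delta> \<mu>"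
  have "(\<lambda>w. ((du_rel2 \<alpha> 0 \<gamma> w + ((1 - \<alpha>) * \<mu>) * ?B [Dg] [Ug] w) + 1 * ?B [Dg, Ug] [Ug] w)
            + (- \<alpha>) * ?B [Ug] [Dg, Ug] w) \<in> tor1_boundaries \<alpha> 0 \<gamma> \<delta> \<mu> \<delta> \<mu>"
    by (intro tor1_boundaries_lincomb du_rel_in_tor1_boundaries bar_bd_in_tor1_boundaries) simp
  then show ?thesis
    by (simp add: du_rel2_def bar_bd_def word_eval_def algebra_simps power2_eq_square)
qed

section \<open>Lower bounds\<close>

lemma du_rel_support_mixed:
  "r \<in> {du_rel1 \<alpha> \<beta> 0, du_rel2 \<alpha> \<beta> 0} \<Longrightarrow> r v \<noteq> 0 \<Longrightarrow> Dg \<in> set v \<and> Ug \<in> set v"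
  by (auto simp: du_rel1_def du_rel2_def fa_mon_def split: if_splits)

lemma fa_pair_derivation_tor1_boundaries_eq_0:
  assumes derivation: "\<And>a b. D (a @ b) = word_eval \<delta> \<mu> a * D b + D a * word_eval \<delta> \<mu> b"
      and mixed: "\<And>w. Dg \<in> set w \<Longrightarrow> Ug \<in> set w \<Longrightarrow> D w = 0"
      and "s \<in> tor1_boundaries \<alpha> \<beta> 0 \<delta> \<mu> \<delta> \<mu>"
  shows "fa_pair D s = 0"
  using assms(3)
proof (rule fa_pair_tor1_boundaries_eq_0[rotated 2])
  show "fa_pair D (bar_bd \<delta> \<mu> \<delta> \<mu> a b) = 0" for a b
    by (simp add: bar_bd_def derivation)
  show "fa_pair D (sandwich a r b) = 0" if "r \<in> {du_rel1 \<alpha> \<beta> 0, du_rel2 \<alpha> \<beta> 0}" for a b r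
    using du_rel_support_mixed[OF that] mixed by (intro fa_pair_sandwich_eq_0) simp
qed

lemma not_spans_modulo_0:
  assumes "x \<in> K" "\<And>s. s \<in> S \<Longrightarrow> fa_pair D s = 0" "fa_pair D x \<noteq> 0"
  shows "\<not> spans_modulo K S 0"
  using assms by (auto simp: spans_modulo_def)

lemma not_spans_modulo_1:
  assumes "K \<subseteq> fa_carrier" "S \<subseteq> fa_carrier"
      and "\<And>s. s \<in> S \<Longrightarrow> fa_pair D1 s = 0" "\<And>s. s \<in> S \<Longrightarrow> fa_pair D2 s = 0"
      and "x1 \<in> K" "fa_pair D1 x1 \<noteq> 0" "fa_pair D2 x1 = 0"
      and "x2 \<in> K" "fa_pair D2 x2 \<noteq> 0"
  shows "\<not> spans_modulo K S 1"
proof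
  assume "spans_modulo K S 1"
  then obtain v where v: "v 0 \<in> K" and K: "K \<subseteq> {(\<lambda>w. s w + fa_lincomb c v 1 w) | s c. s \<in> S}"
    unfolding spans_modulo_def by auto
  have pair: "fa_pair D x = c * fa_pair D (v 0)"
    if "\<And>s. s \<in> S \<Longrightarrow> fa_pair D s = 0" "x = (\<lambda>w. s w + c * v 0 w)" "s \<in> S" for D x s c
  proof -
    have "s \<in> fa_carrier" "v 0 \<in> fa_carrier" using that(3) v assms(1,2) by auto
    then show ?thesis using that by simp
  qed
  obtain s1 c1 where "s1 \<in> S" "x1 = (\<lambda>w. s1 w + c1 * v 0 w)" using K assms(5) by auto
  then have "fa_pair D1 x1 = c1 * fa_pair D1 (v 0)" "fa_pair D2 x1 = c1 * fa_pair D2 (v 0)"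
    using pair assms(3,4) by blast+
  then have "fa_pair D2 (v 0) = 0" using assms(6,7) by auto
  moreover obtain s2 c2 where "s2 \<in> S" "x2 = (\<lambda>w. s2 w + c2 * v 0 w)" using K assms(8) by auto
  ultimately show False using pair[OF assms(4)] assms(9) by force
qed

lemma word_eval_0_0: "word_eval 0 0 w = (if w = [] then 1 else 0)"
  by (cases w) (auto simp: word_eval_def split: gen.splits)

lemma word_eval_Ug_0: "word_eval \<delta> 0 w = (if Ug \<in> set w then 0 else \<delta> ^ length w)"
  by (induction w) (auto simp: word_eval_def split: gen.splits)

lemma word_eval_Dg_0: "word_eval 0 \<mu> w = (if Dg \<in> set w then 0 else \<mu> ^ length w)"
  by (induction w) (auto simp: word_eval_def split: gen.splits)

lemma power_leibniz:
  fixes e :: "'a::comm_semiring_1"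
  shows "e ^ m * (of_nat n * e ^ (n - 1)) + of_nat m * e ^ (m - 1) * e ^ n
       = of_nat (m + n) * e ^ (m + n - 1)"
proof (cases "m = 0 \<or> n = 0")
  case False
  then have "e ^ (m + n - 1) = e ^ m * e ^ (n - 1)" "e ^ (m + n - 1) = e ^ (m - 1) * e ^ n"
    by (simp_all flip: power_add)
  then show ?thesis by (simp add: algebra_simps)
qed auto

lemma not_spans_modulo_0_tor1_self:
  assumes \<chi>: "\<And>w. word_eval \<delta> \<mu> w = (if h \<in> set w then 0 else e ^ length w)" and "g \<noteq> h"
  shows "\<not> spans_modulo (tor1_cycles \<delta> \<mu> \<delta> \<mu>) (tor1_boundaries \<alpha> 0 0 \<delta> \<mu> \<delta> \<mu>) 0"
proof -
  \<comment> \<open>the derivative of the character \<open>w \<mapsto> e ^ length w\<close> with respect to \<open>e\<close>\<close>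
  define D where "D w = (if h \<in> set w then 0 else of_nat (length w) * e ^ (length w - 1))" for w
  have "fa_pair D s = 0" if "s \<in> tor1_boundaries \<alpha> 0 0 \<delta> \<mu> \<delta> \<mu>" for s
  proof (rule fa_pair_derivation_tor1_boundaries_eq_0[OF _ _ that])
    show "D (a @ b) = word_eval \<delta> \<mu> a * D b + D a * word_eval \<delta> \<mu> b" for a b
      using power_leibniz[of e "length a" "length b"] by (simp add: D_def \<chi>)
    show "D w = 0" if "Dg \<in> set w" "Ug \<in> set w" for w
      using that by (cases h) (simp_all add: D_def)
  qed
  moreover have "fa_pair D (fa_mon [g]) \<noteq> 0" using assms(2) by (simp add: D_def)
  ultimately show ?thesis by (intro not_spans_modulo_0[OF fa_mon_gen_in_tor1_cycles])
qed

lemma tor1_dim_trivial: "tor1_dim \<alpha> 0 0 0 0 (0::'k::field) = 2"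
  unfolding tor1_dim_def
proof (rule fa_codim_eqI)
  show "spans_modulo (tor1_cycles 0 0 0 0) (tor1_boundaries \<alpha> 0 0 0 0 0 0) 2"
    by (rule spans_modulo_tor1_cycles_2) (simp add: one_dim_module_def)
  \<comment> \<open>the coefficient of a generator is a derivation for the trivial character\<close>
  have coeff: "fa_pair (\<lambda>w. if w = [g] then 1 else 0 :: 'k) s = 0"
    if "s \<in> tor1_boundaries \<alpha> 0 0 0 0 0 0" for g s
  proof (rule fa_pair_derivation_tor1_boundaries_eq_0[OF _ _ that])
    show "(if a @ b = [g] then 1 else 0) = word_eval 0 0 a * (if b = [g] then 1 else 0)
        + (if a = [g] then 1 else 0) * word_eval 0 0 b" for a b :: "gen list"
      by (cases a) (auto simp: word_eval_0_0)
  qed auto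
  fix m :: nat assume "m < 2"
  then consider "m = 0" | "m = 1" by linarith
  then show "\<not> spans_modulo (tor1_cycles 0 0 0 0) (tor1_boundaries \<alpha> 0 0 0 0 0 0) m"
  proof cases
    case 1
    have "fa_pair (\<lambda>w. if w = [Dg] then 1 else 0 :: 'k) (fa_mon [Dg]) \<noteq> 0" by simp
    with fa_mon_gen_in_tor1_cycles coeff show ?thesis unfolding 1
      by (rule not_spans_modulo_0)
  next
    case 2
    show ?thesis unfolding 2
      by (rule not_spans_modulo_1[OF _ tor1_boundaries_subset_fa_carrier coeff coeff
            fa_mon_gen_in_tor1_cycles[of Dg] _ _ fa_mon_gen_in_tor1_cycles[of Ug]])
         (auto simp: tor1_cycles_def)
  qed
qed

lemma tor1_dim_le_2:
  assumes "one_dim_module \<alpha> \<gamma> \<delta>1 \<mu>1" "one_dim_module \<alpha> \<gamma> \<delta>2 \<mu>2"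
  shows "tor1_dim \<alpha> \<gamma> \<delta>1 \<mu>1 \<delta>2 \<mu>2 \<le> 2"
proof (cases "(\<delta>1, \<mu>1) = (\<delta>2, \<mu>2)")
  case True
  then show ?thesis
    using fa_codim_le[OF spans_modulo_tor1_cycles_2[OF assms(1)]] by (simp add: tor1_dim_def)
next
  case False
  then show ?thesis
    using fa_codim_le[OF spans_modulo_tor1_cycles_distinct[OF assms False]] by (simp add: tor1_dim_def)
qed

lemma tor1_dim_le_1_distinct:
  assumes "one_dim_module \<alpha> \<gamma> \<delta>1 \<mu>1" "one_dim_module \<alpha> \<gamma> \<delta>2 \<mu>2" "(\<delta>1, \<mu>1) \<noteq> (\<delta>2, \<mu>2)"
  shows "tor1_dim \<alpha> \<gamma> \<delta>1 \<mu>1 \<delta>2 \<mu>2 \<le> 1"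
  using fa_codim_le[OF spans_modulo_tor1_cycles_distinct[OF assms]] by (simp add: tor1_dim_def)

lemma tor1_dim_self_le_1:
  assumes "one_dim_module \<alpha> \<gamma> \<delta> \<mu>" "\<gamma> \<noteq> 0"
  shows "tor1_dim \<alpha> \<gamma> \<delta> \<mu> \<delta> \<mu> \<le> 1"
proof -
  have "(1 - \<alpha>) * (2 * \<delta> * \<mu>) - \<gamma> \<noteq> 0"
  proof (cases "(1 - \<alpha>) * \<delta> * \<mu> = \<gamma>")
    case True
    have "(1 - \<alpha>) * (2 * \<delta> * \<mu>) - \<gamma> = 2 * ((1 - \<alpha>) * \<delta> * \<mu>) - \<gamma>"
      by (simp add: algebra_simps)
    also have "\<dots> = \<gamma>" unfolding True by (metis add_diff_cancel_right' mult_2)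
    finally show ?thesis using assms(2) by (simp only: not_False_eq_True)
  next
    case False
    then have "\<delta> = 0" using assms(1) unfolding one_dim_module_def by simp
    with assms(2) show ?thesis by simp
  qed
  then have "spans_modulo (tor1_cycles \<delta> \<mu> \<delta> \<mu>) (tor1_boundaries \<alpha> 0 \<gamma> \<delta> \<mu> \<delta> \<mu>) 1"
    by (intro spans_modulo_tor1_cycles_1[OF assms(1) du_rel1_reduced_in_tor1_boundaries] disjI1)
  then show ?thesis unfolding tor1_dim_def by (rule fa_codim_le)
qed

lemma one_dim_module_1: "one_dim_module 1 \<gamma> \<delta> \<mu> \<Longrightarrow> \<gamma> \<noteq> 0 \<Longrightarrow> \<delta> = 0 \<and> \<mu> = 0"
  by (simp add: one_dim_module_def)

lemma tor1_dim_1_trivial: "\<gamma> \<noteq> 0 \<Longrightarrow> tor1_dim 1 \<gamma> 0 0 0 0 = 0"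
  using fa_codim_le[OF spans_modulo_tor1_cycles_0[of 1 \<gamma> 0 0 "- \<gamma>" "- \<gamma>"]]
    du_rel1_reduced_in_tor1_boundaries[of 1 0 0 \<gamma>] du_rel2_reduced_in_tor1_boundaries[of 1 0 0 \<gamma>]
  by (simp add: tor1_dim_def one_dim_module_def)

lemma tor1_dim_self_nontrivial:
  assumes "\<alpha> \<noteq> 1" "one_dim_module \<alpha> 0 \<delta> \<mu>" "(\<delta>, \<mu>) \<noteq> (0, 0)"
  shows "tor1_dim \<alpha> 0 \<delta> \<mu> \<delta> \<mu> = 1"
proof -
  have "(1 - \<alpha>) * \<delta> * \<mu> = 0" using assms(2,3) by (auto simp: one_dim_module_def)
  with assms(1,3) consider "\<delta> \<noteq> 0" "\<mu> = 0" | "\<delta> = 0" "\<mu> \<noteq> 0" by auto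
  then have "spans_modulo (tor1_cycles \<delta> \<mu> \<delta> \<mu>) (tor1_boundaries \<alpha> 0 0 \<delta> \<mu> \<delta> \<mu>) 1
    \<and> \<not> spans_modulo (tor1_cycles \<delta> \<mu> \<delta> \<mu>) (tor1_boundaries \<alpha> 0 0 \<delta> \<mu> \<delta> \<mu>) 0"
  proof cases
    case 1
    then show ?thesis
      using spans_modulo_tor1_cycles_1[OF assms(2) du_rel1_reduced_in_tor1_boundaries] assms(1)
        not_spans_modulo_0_tor1_self[of \<delta> \<mu> Ug \<delta> Dg] by (simp add: word_eval_Ug_0)
  next
    case 2
    then show ?thesis
      using spans_modulo_tor1_cycles_1[OF assms(2) du_rel2_reduced_in_tor1_boundaries] assms(1)
        not_spans_modulo_0_tor1_self[of \<delta> \<mu> Dg \<mu> Ug] by (simp add: word_eval_Dg_0)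
  qed
  then show ?thesis unfolding tor1_dim_def by (intro fa_codim_eqI) auto
qed

theorem lemma3p3:
  fixes \<alpha> \<gamma> \<delta>1 \<mu>1 \<delta>2 \<mu>2 :: "'k::field_char_0"
  assumes "one_dim_module \<alpha> \<gamma> \<delta>1 \<mu>1"
      and "one_dim_module \<alpha> \<gamma> \<delta>2 \<mu>2"
  shows "(\<gamma> \<noteq> 0 \<and> \<alpha> = 1 \<longrightarrow> tor1_dim \<alpha> \<gamma> \<delta>1 \<mu>1 \<delta>2 \<mu>2 = 0)
       \<and> (\<gamma> \<noteq> 0 \<and> \<alpha> \<noteq> 1 \<longrightarrow> tor1_dim \<alpha> \<gamma> \<delta>1 \<mu>1 \<delta>2 \<mu>2 \<le> 1)
       \<and> (\<gamma> = 0 \<longrightarrow>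
            tor1_dim \<alpha> \<gamma> \<delta>1 \<mu>1 \<delta>2 \<mu>2 \<le> 2
          \<and> tor1_dim \<alpha> \<gamma> 0 0 0 0 = 2
          \<and> (\<forall>\<delta> \<mu>. \<alpha> \<noteq> 1 \<and> one_dim_module \<alpha> \<gamma> \<delta> \<mu> \<and> (\<delta>, \<mu>) \<noteq> (0, 0)
                 \<longrightarrow> tor1_dim \<alpha> \<gamma> \<delta> \<mu> \<delta> \<mu> = 1))"
proof (intro conjI impI allI)
  assume "\<gamma> \<noteq> 0 \<and> \<alpha> = 1"
  then have "\<gamma> \<noteq> 0" "\<alpha> = 1" by simp_all
  moreover from this have "\<delta>1 = 0 \<and> \<mu>1 = 0" "\<delta>2 = 0 \<and> \<mu>2 = 0"
    using assms one_dim_module_1 by blast+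
  ultimately show "tor1_dim \<alpha> \<gamma> \<delta>1 \<mu>1 \<delta>2 \<mu>2 = 0" using tor1_dim_1_trivial by simp
next
  assume "\<gamma> \<noteq> 0 \<and> \<alpha> \<noteq> 1"
  then show "tor1_dim \<alpha> \<gamma> \<delta>1 \<mu>1 \<delta>2 \<mu>2 \<le> 1"
  proof (cases "(\<delta>1, \<mu>1) = (\<delta>2, \<mu>2)")
    case True
    with \<open>\<gamma> \<noteq> 0 \<and> \<alpha> \<noteq> 1\<close> show ?thesis using tor1_dim_self_le_1[OF assms(1)] by simp
  qed (rule tor1_dim_le_1_distinct[OF assms])
next
  fix \<delta> \<mu> assume "\<gamma> = 0" "\<alpha> \<noteq> 1 \<and> one_dim_module \<alpha> \<gamma> \<delta> \<mu> \<and> (\<delta>, \<mu>) \<noteq> (0, 0)"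
  then show "tor1_dim \<alpha> \<gamma> \<delta> \<mu> \<delta> \<mu> = 1" using tor1_dim_self_nontrivial by blast
qed (use assms tor1_dim_le_2 tor1_dim_trivial in simp_all)

end
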